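(* Suppose $\mathcal Y=\mathbb R$, $\ell(y,\beta)=(y-\beta)^2$, and $\mathbb D_{\mathcal Y}(\cdot,\hat y)$ is convex and coercive for every $\hat y$. Let $\rho\ge\min_{i\in[N]}\kappa_{i,\gamma}$ and suppose $$\mathbb Q^\star\in\arg\max\{\operatorname{Var}_{\mathbb Q}(Y\mid X\in\mathcal N_\gamma(x_0)):\mathbb Q\in\mathbb B^\infty_\rho,\ \mathbb Q(X\in\mathcal N_\gamma(x_0))>0\}$$ exists. Then $\beta^\star=\mathbb E_{\mathbb Q^\star}[Y\mid X\in\mathcal N_\gamma(x_0)]$ is an optimal solution of $\min_{\beta\in\mathbb R}f(\beta)$, and every optimal solution of this problem equals $\beta^\star$.
   Context: Continuous metrics $\mathbb D_{\mathcal X}$ on $\mathcal X\subseteq\mathbb R^n$ and $\mathbb D_{\mathcal Y}$ on $\mathcal Y$, $\mathbb D=\mathbb D_{\mathcal X}+\mathbb D_{\mathcal Y}$; data $(\hat x_i,\hat y_i)\in\mathcal X\times\mathcal Y$, $\hat{\mathbb P}=\frac1N\sum_i\delta_{(\hat x_i,\hat y_i)}$; $\mathbb W_\infty(\mathbb Q_1,\mathbb Q_2)=\inf_{\pi\in\Pi(\mathbb Q_1,\mathbb Q_2)}\operatorname{ess\,sup}_\pi\mathbb D(\xi_1,\xi_2)$; $\mathbb B^\infty_\rho=\{\mathbb Q:\mathbb W_\infty(\mathbb Q,\hat{\mathbb P})\le\rho\}$; $\mathcal N_\gamma(x_0)=\{x\in\mathcal X:\mathbb D_{\mathcal X}(x,x_0)\le\gamma\}$,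 compact, $x_0\in\mathcal X$, $\gamma\ge0$; $f(\beta)=\sup\{\mathbb E_{\mathbb Q}[\ell(Y,\beta)\mid X\in\mathcal N_\gamma(x_0)]:\mathbb Q\in\mathbb B^\infty_\rho,\ \mathbb Q(X\in\mathcal N_\gamma(x_0))>0\}$ with $\mathbb E_{\mathbb Q}[\cdot\mid X\in A]=\mathbb E_{\mathbb Q}[\cdot\,\mathbf 1_{X\in A}]/\mathbb Q(X\in A)$, and conditional variance defined analogously; $\kappa_{i,\gamma}=\min_{x\in\mathcal N_\gamma(x_0)}\mathbb D_{\mathcal X}(x,\hat x_i)+\inf_{y\in\mathcal Y}\mathbb D_{\mathcal Y}(y,\hat y_i)$. *)

theory Defs
  imports "HOL-Probability.Probability"
begin

definition ess_sup :: "'b measure \<Rightarrow> ('b \<Rightarrow> real) \<Rightarrow> ereal" where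
  "ess_sup M f = Inf {c::ereal. AE z in M. ereal (f z) \<le> c}"

definition Dcost :: "('a \<Rightarrow> 'a \<Rightarrow> real) \<Rightarrow> (real \<Rightarrow> real \<Rightarrow> real)
    \<Rightarrow> ('a \<times> real) \<times> ('a \<times> real) \<Rightarrow> real" where
  "Dcost DX DY p = DX (fst (fst p)) (fst (snd p)) + DY (snd (fst p)) (snd (snd p))"

definition distribs :: "'a::euclidean_space set \<Rightarrow> ('a \<times> real) measure set" where
  "distribs Xs = {Q. prob_space Q \<and> sets Q = sets borel \<and> (AE z in Q. fst z \<in> Xs)}"

definition couplings :: "('a::euclidean_space \<times> real) measure \<Rightarrow> ('a \<times> real) measure
    \<Rightarrow> (('a \<times> real) \<times> ('a \<times> real)) measure set" where
  "couplings Q1 Q2 = {\<pi>. prob_space \<pi> \<and> sets \<pi> = sets borel \<and>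
      distr \<pi> borel fst = Q1 \<and> distr \<pi> borel snd = Q2}"

definition W_inf :: "('a::euclidean_space \<Rightarrow> 'a \<Rightarrow> real) \<Rightarrow> (real \<Rightarrow> real \<Rightarrow> real)
    \<Rightarrow> ('a \<times> real) measure \<Rightarrow> ('a \<times> real) measure \<Rightarrow> ereal" where
  "W_inf DX DY Q1 Q2 = (INF \<pi>\<in>couplings Q1 Q2. ess_sup \<pi> (Dcost DX DY))"

definition empirical :: "nat \<Rightarrow> (nat \<Rightarrow> 'a::euclidean_space) \<Rightarrow> (nat \<Rightarrow> real)
    \<Rightarrow> ('a \<times> real) measure" where
  "empirical N xh yh = distr (measure_pmf (pmf_of_set {..<N})) borel (\<lambda>i. (xh i, yh i))"

definition W_ball :: "'a::euclidean_space set \<Rightarrow> ('a \<Rightarrow> 'a \<Rightarrow> real) \<Rightarrow> (real \<Rightarrow> real \<Rightarrow> real)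
    \<Rightarrow> nat \<Rightarrow> (nat \<Rightarrow> 'a) \<Rightarrow> (nat \<Rightarrow> real) \<Rightarrow> real \<Rightarrow> ('a \<times> real) measure set" where
  "W_ball Xs DX DY N xh yh \<rho> =
     {Q \<in> distribs Xs. W_inf DX DY Q (empirical N xh yh) \<le> ereal \<rho>}"

definition nbhd :: "'a set \<Rightarrow> ('a \<Rightarrow> 'a \<Rightarrow> real) \<Rightarrow> real \<Rightarrow> 'a \<Rightarrow> 'a set" where
  "nbhd Xs DX \<gamma> x0 = {x \<in> Xs. DX x x0 \<le> \<gamma>}"

definition cond_exp :: "('a \<times> real) measure \<Rightarrow> ('a \<times> real \<Rightarrow> real) \<Rightarrow> 'a set \<Rightarrow> real" where
  "cond_exp Q g A = (\<integral>z. indicator A (fst z) * g z \<partial>Q) / measure Q {z. fst z \<in> A}"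

definition cond_var :: "('a \<times> real) measure \<Rightarrow> 'a set \<Rightarrow> real" where
  "cond_var Q A = cond_exp Q (\<lambda>z. (snd z - cond_exp Q snd A)^2) A"

definition admissible where
  "admissible Xs DX DY N xh yh \<rho> A =
     {Q \<in> W_ball Xs DX DY N xh yh \<rho>. measure Q {z. fst z \<in> A} > 0}"

definition f_obj where
  "f_obj Xs DX DY N xh yh \<rho> A \<beta> =
     (SUP Q\<in>admissible Xs DX DY N xh yh \<rho> A. ereal (cond_exp Q (\<lambda>z. (snd z - \<beta>)^2) A))"

definition kappa where
  "kappa DX DY A xh yh i = (INF x\<in>A. DX x (xh i)) + (INF y. DY y (yh i))"

end

theory Submission
  imports Defs
begin

text \<open>
  Mixing a competitor Q into the variance maximiser Q* with a small weight stays inside the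
  W\<infinity>-ball (the ball is convex) and keeps positive mass on the neighbourhood. Writing m for
  the conditional mean of Y under Q* and \<lambda> for the conditional weight of Q in the mixture,
  the conditional variance of the mixture is
  \<lambda> E_Q[(Y-m)^2|A] + (1-\<lambda>) Var_Q*(Y|A) - \<lambda>^2 (E_Q[Y|A] - m)^2,
  and maximality of Q* for \<lambda> \<rightarrow> 0 yields E_Q[(Y-m)^2|A] \<le> Var_Q*(Y|A). Hence
  f(m) \<le> Var_Q*(Y|A), while evaluating the supremum at Q* gives
  f(\<beta>) \<ge> Var_Q*(Y|A) + (m - \<beta>)^2, so m is the unique minimiser of f.
  All conditional moments exist because coercivity of D_Y makes Y essentially bounded on the
  ball. Beyond that only nonnegativity of D_X is used; the bound \<rho> \<ge> min \<kappa> merely ensures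
  that admissible distributions exist, which the existence of Q* already provides.
\<close>

definition mix :: "real \<Rightarrow> 'b measure \<Rightarrow> 'b measure \<Rightarrow> 'b measure" where
  "mix t M1 M2 = measure_pmf (bernoulli_pmf t) \<bind> (\<lambda>b. if b then M1 else M2)"

lemma mix_kernel_measurable:
  assumes "prob_space M1" "prob_space M2" "sets M1 = sets M2"
  shows "(\<lambda>b. if b then M1 else M2) \<in> measurable (measure_pmf (bernoulli_pmf t)) (subprob_algebra M1)"
  using assms by (auto simp: space_subprob_algebra prob_space_imp_subprob_space)

lemma sets_mix [simp]:
  assumes "sets M1 = sets M2"
  shows "sets (mix t M1 M2) = sets M1"
  unfolding mix_def using assms by (subst sets_bind[where N=M1]) auto

lemma prob_space_mix:
  assumes "prob_space M1" "prob_space M2" "sets M1 = sets M2" "0 \<le> t" "t \<le> 1"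
  shows "prob_space (mix t M1 M2)"
  unfolding mix_def
  by (rule prob_space.prob_space_bind[OF prob_space_measure_pmf _ mix_kernel_measurable[OF assms(1-3)]])
     (use assms in auto)

lemma emeasure_mix:
  assumes "prob_space M1" "prob_space M2" "sets M1 = sets M2" "0 \<le> t" "t \<le> 1" "A \<in> sets M1"
  shows "emeasure (mix t M1 M2) A = emeasure M1 A * t + emeasure M2 A * (1 - t)"
  unfolding mix_def
  using assms by (subst emeasure_bind[OF _ mix_kernel_measurable[OF assms(1-3)]]) (auto simp: ennreal_mult')

lemma nn_integral_mix:
  assumes "prob_space M1" "prob_space M2" "sets M1 = sets M2" "0 \<le> t" "t \<le> 1"
    and "f \<in> borel_measurable M1"
  shows "(\<integral>\<^sup>+x. f x \<partial>mix t M1 M2) = (\<integral>\<^sup>+x. f x \<partial>M1) * t + (\<integral>\<^sup>+x. f x \<partial>M2) * (1 - t)"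
  unfolding mix_def
  using assms by (subst nn_integral_bind[OF assms(6) mix_kernel_measurable[OF assms(1-3)]])
    (auto simp: ennreal_mult')

lemma enn2real_convex_combination:
  assumes "a \<noteq> \<infinity>" "b \<noteq> \<infinity>" "0 \<le> t" "t \<le> 1"
  shows "enn2real (a * ennreal t + b * ennreal (1 - t)) = enn2real a * t + enn2real b * (1 - t)"
proof -
  obtain x where x: "a = ennreal x" "0 \<le> x" using assms(1) by (cases a) auto
  obtain y where y: "b = ennreal y" "0 \<le> y" using assms(2) by (cases b) auto
  show ?thesis using x y assms(3,4)
    by (simp add: ennreal_mult[symmetric] ennreal_plus[symmetric] del: ennreal_plus)
qed

lemma measure_mix:
  assumes "prob_space M1" "prob_space M2" "sets M1 = sets M2" "0 \<le> t" "t \<le> 1" "A \<in> sets M1"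
  shows "measure (mix t M1 M2) A = measure M1 A * t + measure M2 A * (1 - t)"
proof -
  interpret P1: prob_space M1 by fact
  interpret P2: prob_space M2 by fact
  show ?thesis
    unfolding measure_def emeasure_mix[OF assms]
    by (rule enn2real_convex_combination) (use assms in auto)
qed

lemma integral_mix:
  fixes f :: "_ \<Rightarrow> real"
  assumes "prob_space M1" "prob_space M2" "sets M1 = sets M2" "0 \<le> t" "t \<le> 1"
    and f1: "integrable M1 f" and f2: "integrable M2 f"
  shows "integrable (mix t M1 M2) f"
    and "integral\<^sup>L (mix t M1 M2) f = integral\<^sup>L M1 f * t + integral\<^sup>L M2 f * (1 - t)"
proof -
  have "f \<in> borel_measurable M1" using f1 by auto
  then have meas: "f \<in> borel_measurable (mix t M1 M2)"
    by (subst measurable_cong_sets[OF sets_mix[OF assms(3)] refl])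
  have pos: "(\<integral>\<^sup>+ x. ennreal (f x) \<partial>mix t M1 M2) =
      (\<integral>\<^sup>+ x. ennreal (f x) \<partial>M1) * t + (\<integral>\<^sup>+ x. ennreal (f x) \<partial>M2) * (1 - t)"
   and neg: "(\<integral>\<^sup>+ x. ennreal (- f x) \<partial>mix t M1 M2) =
      (\<integral>\<^sup>+ x. ennreal (- f x) \<partial>M1) * t + (\<integral>\<^sup>+ x. ennreal (- f x) \<partial>M2) * (1 - t)"
    using \<open>f \<in> borel_measurable M1\<close> by (auto intro!: nn_integral_mix[OF assms(1-5)])
  have fin1: "(\<integral>\<^sup>+ x. ennreal (f x) \<partial>M1) \<noteq> \<infinity>" "(\<integral>\<^sup>+ x. ennreal (- f x) \<partial>M1) \<noteq> \<infinity>"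
    using f1 unfolding real_integrable_def by auto
  have fin2: "(\<integral>\<^sup>+ x. ennreal (f x) \<partial>M2) \<noteq> \<infinity>" "(\<integral>\<^sup>+ x. ennreal (- f x) \<partial>M2) \<noteq> \<infinity>"
    using f2 unfolding real_integrable_def by auto
  show int: "integrable (mix t M1 M2) f"
    unfolding real_integrable_def using meas pos neg fin1 fin2
    by (simp add: ennreal_mult_eq_top_iff)
  show "integral\<^sup>L (mix t M1 M2) f = integral\<^sup>L M1 f * t + integral\<^sup>L M2 f * (1 - t)"
    unfolding real_lebesgue_integral_def[OF int] real_lebesgue_integral_def[OF f1]
      real_lebesgue_integral_def[OF f2] pos neg
    by (simp only: enn2real_convex_combination[OF fin1(1) fin2(1) assms(4,5)]
        enn2real_convex_combination[OF fin1(2) fin2(2) assms(4,5)])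
      (simp add: algebra_simps)
qed

lemma mix_same:
  assumes "prob_space M" "0 \<le> t" "t \<le> 1"
  shows "mix t M M = M"
proof (rule measure_eqI)
  fix A assume "A \<in> sets (mix t M M)"
  then have "emeasure (mix t M M) A = emeasure M A * (ennreal t + ennreal (1 - t))"
    using emeasure_mix[OF assms(1,1) refl assms(2,3)] by (simp add: distrib_left)
  also have "ennreal t + ennreal (1 - t) = 1" using assms by (simp flip: ennreal_plus)
  finally show "emeasure (mix t M M) A = emeasure M A" by simp
qed simp

text \<open>No measurability of P is required, which matters since the cost need not be measurable.\<close>

lemma AE_mix:
  assumes "prob_space M1" "prob_space M2" "sets M1 = sets M2" "0 \<le> t" "t \<le> 1"
    and "AE x in M1. P x" "AE x in M2. P x"
  shows "AE x in mix t M1 M2. P x"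
proof -
  obtain N1 where N1: "{x \<in> space M1. \<not> P x} \<subseteq> N1" "emeasure M1 N1 = 0" "N1 \<in> sets M1"
    using assms(6) by (auto elim: AE_E)
  obtain N2 where N2: "{x \<in> space M2. \<not> P x} \<subseteq> N2" "emeasure M2 N2 = 0" "N2 \<in> sets M2"
    using assms(7) by (auto elim: AE_E)
  have N12: "N1 \<inter> N2 \<in> sets M1" using N1 N2 assms(3) by auto
  have "emeasure M1 (N1 \<inter> N2) = 0" "emeasure M2 (N1 \<inter> N2) = 0"
    using N1 N2 N12 assms(3) by (metis emeasure_mono inf_le1 inf_le2 le_zero_eq)+
  then have "emeasure (mix t M1 M2) (N1 \<inter> N2) = 0"
    using emeasure_mix[OF assms(1-5) N12] by simp
  moreover have "{x \<in> space (mix t M1 M2). \<not> P x} \<subseteq> N1 \<inter> N2"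
    using N1 N2 sets_eq_imp_space_eq[OF sets_mix[OF assms(3)]] sets_eq_imp_space_eq[OF assms(3)]
    by auto
  ultimately show ?thesis using N12 assms(3) by (intro AE_I[where N="N1 \<inter> N2"]) auto
qed

lemma distr_mix:
  assumes "prob_space M1" "prob_space M2" "sets M1 = sets M2" "g \<in> measurable M1 N"
  shows "distr (mix t M1 M2) N g = mix t (distr M1 N g) (distr M2 N g)"
  unfolding mix_def
  by (subst distr_bind[OF mix_kernel_measurable[OF assms(1-3)] _ assms(4)])
     (auto intro: bind_cong)

lemma AE_le_of_ess_sup_less:
  assumes "ess_sup M f < c"
  shows "AE z in M. ereal (f z) \<le> c"
proof -
  from assms obtain d where "AE z in M. ereal (f z) \<le> d" "d < c"
    unfolding ess_sup_def Inf_less_iff by auto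
  then show ?thesis by (auto elim: eventually_mono)
qed

lemma ess_sup_le_of_AE:
  assumes "AE z in M. ereal (f z) \<le> c"
  shows "ess_sup M f \<le> c"
  unfolding ess_sup_def using assms by (auto intro: Inf_lower)

lemma fst_measurable_borel:
  assumes "sets M = sets (borel :: ('x::topological_space \<times> 'y::topological_space) measure)"
  shows "fst \<in> measurable M borel"
  unfolding measurable_cong_sets[OF assms refl]
  by (intro borel_measurable_continuous_onI continuous_on_fst continuous_on_id)

lemma snd_measurable_borel:
  assumes "sets M = sets (borel :: ('x::topological_space \<times> 'y::topological_space) measure)"
  shows "snd \<in> measurable M borel"
  unfolding measurable_cong_sets[OF assms refl]
  by (intro borel_measurable_continuous_onI continuous_on_snd continuous_on_id)

lemma W_inf_less_obtains_coupling:
  assumes "W_inf DX DY Q P < c"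
  obtains \<pi> where "prob_space \<pi>" "sets \<pi> = sets borel" "distr \<pi> borel fst = Q"
    "distr \<pi> borel snd = P" "AE w in \<pi>. ereal (Dcost DX DY w) \<le> c"
  using assms unfolding W_inf_def INF_less_iff couplings_def
  by (auto dest: AE_le_of_ess_sup_less)

lemma mix_in_W_ball:
  assumes Q1: "Q1 \<in> W_ball Xs DX DY N xh yh \<rho>" and Q2: "Q2 \<in> W_ball Xs DX DY N xh yh \<rho>"
    and t: "0 \<le> t" "t \<le> 1"
  shows "mix t Q1 Q2 \<in> W_ball Xs DX DY N xh yh \<rho>"
proof -
  let ?P = "empirical N xh yh"
  have d1: "prob_space Q1" "sets Q1 = sets borel" "AE z in Q1. fst z \<in> Xs"
    and d2: "prob_space Q2" "sets Q2 = sets borel" "AE z in Q2. fst z \<in> Xs"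
    and w1: "W_inf DX DY Q1 ?P \<le> ereal \<rho>" and w2: "W_inf DX DY Q2 ?P \<le> ereal \<rho>"
    using Q1 Q2 by (auto simp: W_ball_def distribs_def)
  have "mix t Q1 Q2 \<in> distribs Xs"
    unfolding distribs_def using d1 d2 t
    by (simp add: prob_space_mix AE_mix)
  moreover have "W_inf DX DY (mix t Q1 Q2) ?P \<le> ereal \<rho>"
  proof (rule ereal_le_epsilon2)
    fix e :: real assume "0 < e"
    then have "W_inf DX DY Q1 ?P < ereal (\<rho> + e)" "W_inf DX DY Q2 ?P < ereal (\<rho> + e)"
      using w1 w2 by (auto intro: le_less_trans)
    then obtain \<pi>1 \<pi>2
      where c1: "prob_space \<pi>1" "sets \<pi>1 = sets borel" "distr \<pi>1 borel fst = Q1"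
          "distr \<pi>1 borel snd = ?P" "AE w in \<pi>1. ereal (Dcost DX DY w) \<le> ereal (\<rho> + e)"
        and c2: "prob_space \<pi>2" "sets \<pi>2 = sets borel" "distr \<pi>2 borel fst = Q2"
          "distr \<pi>2 borel snd = ?P" "AE w in \<pi>2. ereal (Dcost DX DY w) \<le> ereal (\<rho> + e)"
      by (elim W_inf_less_obtains_coupling)
    have s12: "sets \<pi>1 = sets \<pi>2" using c1 c2 by simp
    have "prob_space ?P"
      using prob_space.prob_space_distr[OF c1(1) snd_measurable_borel[OF c1(2)]] c1(4) by simp
    then have "mix t \<pi>1 \<pi>2 \<in> couplings (mix t Q1 Q2) ?P"
      unfolding couplings_def
      using c1 c2 s12 t prob_space_mix[OF c1(1) c2(1) s12 t] mix_same[of ?P t]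
        distr_mix[OF c1(1) c2(1) s12 fst_measurable_borel[OF c1(2)], of t]
        distr_mix[OF c1(1) c2(1) s12 snd_measurable_borel[OF c1(2)], of t]
      by simp
    moreover have "ess_sup (mix t \<pi>1 \<pi>2) (Dcost DX DY) \<le> ereal (\<rho> + e)"
      by (intro ess_sup_le_of_AE AE_mix[OF c1(1) c2(1) s12 t c1(5) c2(5)])
    ultimately have "W_inf DX DY (mix t Q1 Q2) ?P \<le> ereal (\<rho> + e)"
      unfolding W_inf_def by (rule INF_lower2)
    then show "W_inf DX DY (mix t Q1 Q2) ?P \<le> ereal \<rho> + ereal e" by simp
  qed
  ultimately show ?thesis unfolding W_ball_def by auto
qed

lemma AE_empirical_in_data:
  assumes "N \<ge> 1"
  shows "AE z in empirical N xh yh. z \<in> (\<lambda>i. (xh i, yh i)) ` {..<N}"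
proof -
  have "closed ((\<lambda>i. (xh i, yh i)) ` {..<N})" by (simp add: finite_imp_closed)
  then have "{x \<in> space borel. x \<in> (\<lambda>i. (xh i, yh i)) ` {..<N}} \<in> sets borel"
    using borel_closed by simp
  moreover have "{..<N} \<noteq> {}" using assms by (auto simp: lessThan_empty_iff)
  ultimately show ?thesis
    unfolding empirical_def by (subst AE_distr_iff) (auto simp: AE_measure_pmf_iff)
qed

lemma fst_in_sets:
  fixes Q :: "('a::euclidean_space \<times> real) measure"
  assumes "sets Q = sets borel" "A \<in> sets borel"
  shows "{z. fst z \<in> A} \<in> sets Q"
  using measurable_sets[OF fst_measurable_borel[OF assms(1)] assms(2)]
  by (simp add: vimage_def sets_eq_imp_space_eq[OF assms(1)])

lemma measure_fst_in_eq_integral: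
  fixes Q :: "('a::euclidean_space \<times> real) measure"
  assumes "prob_space Q" "sets Q = sets borel" "A \<in> sets borel"
  shows "measure Q {z. fst z \<in> A} = (\<integral>z. indicator A (fst z) \<partial>Q)"
proof -
  interpret prob_space Q by fact
  have "(\<integral>z. indicator A (fst z) \<partial>Q) = (\<integral>z. indicator {z. fst z \<in> A} z \<partial>Q)"
    by (intro Bochner_Integration.integral_cong) (auto simp: indicator_def)
  also have "\<dots> = measure Q {z. fst z \<in> A}"
    using fst_in_sets[OF assms(2,3)] by (simp add: emeasure_eq_measure)
  finally show ?thesis ..
qed

lemma cond_exp_sq_dev:
  fixes Q :: "('a::euclidean_space \<times> real) measure"
  assumes "prob_space Q" "sets Q = sets borel" "A \<in> sets borel"
    and pos: "measure Q {z. fst z \<in> A} > 0"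
    and int1: "integrable Q (\<lambda>z. indicator A (fst z) * snd z)"
    and int2: "integrable Q (\<lambda>z. indicator A (fst z) * (snd z)\<^sup>2)"
  shows "cond_exp Q (\<lambda>z. (snd z - \<beta>)\<^sup>2) A
           = cond_exp Q (\<lambda>z. (snd z)\<^sup>2) A - 2 * \<beta> * cond_exp Q snd A + \<beta>\<^sup>2"
proof -
  interpret prob_space Q by fact
  let ?p = "measure Q {z. fst z \<in> A}"
  have int0: "integrable Q (\<lambda>z. indicator A (fst z) :: real)"
    using measurable_compose[OF fst_measurable_borel[OF assms(2)] borel_measurable_indicator[OF assms(3)]]
    by (intro integrable_const_bound[where B=1]) (auto simp: comp_def indicator_def)
  have "(\<lambda>z. indicator A (fst z) * (snd z - \<beta>)\<^sup>2) = (\<lambda>z. indicator A (fst z) * (snd z)\<^sup>2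
      - 2 * \<beta> * (indicator A (fst z) * snd z) + \<beta>\<^sup>2 * indicator A (fst z))"
    by (auto simp: fun_eq_iff power2_eq_square algebra_simps)
  then have "(\<integral>z. indicator A (fst z) * (snd z - \<beta>)\<^sup>2 \<partial>Q) = (\<integral>z. indicator A (fst z) * (snd z)\<^sup>2 \<partial>Q)
      - 2 * \<beta> * (\<integral>z. indicator A (fst z) * snd z \<partial>Q) + \<beta>\<^sup>2 * ?p"
    using int0 int1 int2 measure_fst_in_eq_integral[OF assms(1-3)] by simp
  then show ?thesis
    using pos unfolding cond_exp_def by (simp add: diff_divide_distrib add_divide_distrib)
qed

lemma cond_exp_sq_dev_eq_cond_var:
  fixes Q :: "('a::euclidean_space \<times> real) measure"
  assumes "prob_space Q" "sets Q = sets borel" "A \<in> sets borel"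
    and "measure Q {z. fst z \<in> A} > 0"
    and "integrable Q (\<lambda>z. indicator A (fst z) * snd z)"
    and "integrable Q (\<lambda>z. indicator A (fst z) * (snd z)\<^sup>2)"
  shows "cond_exp Q (\<lambda>z. (snd z - \<beta>)\<^sup>2) A = cond_var Q A + (cond_exp Q snd A - \<beta>)\<^sup>2"
  unfolding cond_var_def cond_exp_sq_dev[OF assms]
  by (simp add: power2_eq_square algebra_simps)

text \<open>The conditional probability, given X \<in> A, that a draw from mix t Q1 Q2 comes from Q1.\<close>

definition cond_mix_weight :: "real \<Rightarrow> ('a \<times> real) measure \<Rightarrow> ('a \<times> real) measure \<Rightarrow> 'a set \<Rightarrow> real"
  where "cond_mix_weight t Q1 Q2 A = t * measure Q1 {z. fst z \<in> A}
           / (t * measure Q1 {z. fst z \<in> A} + (1 - t) * measure Q2 {z. fst z \<in> A})"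

lemma cond_mix_weight_pos:
  assumes "0 < t" "t < 1" "measure Q1 {z. fst z \<in> A} > 0" "measure Q2 {z. fst z \<in> A} > 0"
  shows "cond_mix_weight t Q1 Q2 A > 0"
  using assms unfolding cond_mix_weight_def by (intro divide_pos_pos add_pos_pos) auto

lemma tendsto_cond_mix_weight:
  assumes "measure Q2 {z. fst z \<in> A} > 0"
  shows "((\<lambda>t. cond_mix_weight t Q1 Q2 A) \<longlongrightarrow> 0) (at_right 0)"
proof -
  have "((\<lambda>t. cond_mix_weight t Q1 Q2 A) \<longlongrightarrow> cond_mix_weight 0 Q1 Q2 A) (at_right 0)"
    unfolding cond_mix_weight_def using assms by (intro tendsto_intros) auto
  then show ?thesis by (simp add: cond_mix_weight_def)
qed

lemma cond_exp_mix:
  fixes Q1 Q2 :: "('a::euclidean_space \<times> real) measure"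
  assumes "prob_space Q1" "prob_space Q2" "sets Q1 = sets borel" "sets Q2 = sets borel"
    and "A \<in> sets borel" "0 \<le> t" "t \<le> 1"
    and pos: "measure Q1 {z. fst z \<in> A} > 0" "measure Q2 {z. fst z \<in> A} > 0"
    and "integrable Q1 (\<lambda>z. indicator A (fst z) * g z)"
    and "integrable Q2 (\<lambda>z. indicator A (fst z) * g z)"
  shows "cond_exp (mix t Q1 Q2) g A
    = cond_mix_weight t Q1 Q2 A * cond_exp Q1 g A + (1 - cond_mix_weight t Q1 Q2 A) * cond_exp Q2 g A"
proof -
  let ?p1 = "measure Q1 {z. fst z \<in> A}" and ?p2 = "measure Q2 {z. fst z \<in> A}"
  have sets: "sets Q1 = sets Q2" using assms(3,4) by simp
  have D: "t * ?p1 + (1 - t) * ?p2 > 0"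
    using assms(6,7) pos by (cases "t = 0") (auto intro: add_pos_nonneg)
  have compl: "1 - cond_mix_weight t Q1 Q2 A = (1 - t) * ?p2 / (t * ?p1 + (1 - t) * ?p2)"
    using D by (simp add: cond_mix_weight_def field_simps)
  have "cond_exp (mix t Q1 Q2) g A
      = ((\<integral>z. indicator A (fst z) * g z \<partial>Q1) * t + (\<integral>z. indicator A (fst z) * g z \<partial>Q2) * (1 - t))
        / (t * ?p1 + (1 - t) * ?p2)"
    unfolding cond_exp_def measure_mix[OF assms(1,2) sets assms(6,7) fst_in_sets[OF assms(3,5)]]
      integral_mix(2)[OF assms(1,2) sets assms(6,7,10,11)]
    by (simp add: algebra_simps)
  also have "\<dots> = (t * ?p1 * cond_exp Q1 g A + (1 - t) * ?p2 * cond_exp Q2 g A) / (t * ?p1 + (1 - t) * ?p2)"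
    using pos unfolding cond_exp_def by simp
  also have "\<dots> = cond_mix_weight t Q1 Q2 A * cond_exp Q1 g A + (1 - cond_mix_weight t Q1 Q2 A) * cond_exp Q2 g A"
    unfolding compl by (simp add: cond_mix_weight_def add_divide_distrib)
  finally show ?thesis .
qed

lemma mix_in_admissible:
  assumes "Q1 \<in> admissible Xs DX DY N xh yh \<rho> A" "Q2 \<in> admissible Xs DX DY N xh yh \<rho> A"
    and "A \<in> sets borel" "0 \<le> t" "t \<le> 1"
  shows "mix t Q1 Q2 \<in> admissible Xs DX DY N xh yh \<rho> A"
proof -
  have Q: "Q1 \<in> W_ball Xs DX DY N xh yh \<rho>" "Q2 \<in> W_ball Xs DX DY N xh yh \<rho>"
      "prob_space Q1" "prob_space Q2" "sets Q1 = sets borel" "sets Q2 = sets borel"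
    and pos: "measure Q1 {z. fst z \<in> A} > 0" "measure Q2 {z. fst z \<in> A} > 0"
    using assms(1,2) by (auto simp: admissible_def W_ball_def distribs_def)
  have "measure (mix t Q1 Q2) {z. fst z \<in> A}
      = measure Q1 {z. fst z \<in> A} * t + measure Q2 {z. fst z \<in> A} * (1 - t)"
    using Q(3-6) assms(4,5) by (intro measure_mix fst_in_sets[OF _ assms(3)]) auto
  also have "\<dots> > 0"
    using pos assms(4,5) by (cases "t = 0") (auto intro: add_pos_nonneg)
  finally show ?thesis
    using mix_in_W_ball[OF Q(1,2) assms(4,5)] by (simp add: admissible_def)
qed

context
  fixes Xs :: "'a::euclidean_space set" and DX :: "'a \<Rightarrow> 'a \<Rightarrow> real"
    and DY :: "real \<Rightarrow> real \<Rightarrow> real" and N :: nat and xh :: "nat \<Rightarrow> 'a" and yh :: "nat \<Rightarrow> real"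
    and \<rho> :: real
  assumes DX_nonneg: "\<forall>a\<in>Xs. \<forall>b\<in>Xs. DX a b \<ge> 0"
    and data: "\<forall>i<N. xh i \<in> Xs" and N_pos: "N \<ge> 1"
    and DY_coercive: "\<forall>yh0. filterlim (\<lambda>y. DY y yh0) at_top at_infinity"
begin

text \<open>A coupling with cost below \<rho> + 1 moves every data label by a D_Y-distance at most
  \<rho> + 1, and coercivity turns this into a uniform bound on Y.\<close>

lemma W_ball_AE_snd_bounded:
  assumes "Q \<in> W_ball Xs DX DY N xh yh \<rho>"
  obtains B where "AE z in Q. \<bar>snd z\<bar> \<le> B"
proof -
  have Q: "sets Q = sets borel" "AE z in Q. fst z \<in> Xs"
    and "W_inf DX DY Q (empirical N xh yh) < ereal (\<rho> + 1)"
    using assms by (auto simp: W_ball_def distribs_def intro: le_less_trans)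
  then obtain \<pi> where \<pi>: "sets \<pi> = sets borel" "distr \<pi> borel fst = Q"
      "distr \<pi> borel snd = empirical N xh yh" "AE w in \<pi>. ereal (Dcost DX DY w) \<le> ereal (\<rho> + 1)"
    by (elim W_inf_less_obtains_coupling)
  have "\<forall>i. eventually (\<lambda>y. \<rho> + 1 < DY y (yh i)) at_infinity"
    using DY_coercive by (simp add: filterlim_at_top_dense)
  then obtain r where r: "\<And>i y. r i \<le> \<bar>y\<bar> \<Longrightarrow> \<rho> + 1 < DY y (yh i)"
    unfolding eventually_at_infinity real_norm_def by metis
  define B where "B = (\<Sum>i<N. \<bar>r i\<bar>)"
  have rB: "r i \<le> B" if "i < N" for i
    using member_le_sum[of i "{..<N}" "\<lambda>i. \<bar>r i\<bar>"] that unfolding B_def by auto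
  have "AE w in \<pi>. fst (fst w) \<in> Xs"
    by (rule AE_distrD[OF fst_measurable_borel[OF \<pi>(1)]]) (unfold \<pi>(2), fact Q(2))
  moreover have "AE w in \<pi>. snd w \<in> (\<lambda>i. (xh i, yh i)) ` {..<N}"
    by (rule AE_distrD[OF snd_measurable_borel[OF \<pi>(1)]]) (unfold \<pi>(3), fact AE_empirical_in_data[OF N_pos])
  ultimately have "AE w in \<pi>. \<bar>snd (fst w)\<bar> \<le> B"
    using \<pi>(4)
  proof eventually_elim
    case (elim w)
    then obtain i where i: "i < N" "snd w = (xh i, yh i)" by auto
    then have "DX (fst (fst w)) (xh i) \<ge> 0" using DX_nonneg data elim(1) by auto
    then have "DY (snd (fst w)) (yh i) \<le> \<rho> + 1"
      using elim(3) i by (simp add: Dcost_def)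
    then show ?case using r[of i "snd (fst w)"] rB[OF i(1)] by force
  qed
  moreover have "closed {z :: 'a \<times> real. \<bar>snd z\<bar> \<le> B}"
    by (intro closed_Collect_le continuous_intros)
  ultimately have "AE z in Q. \<bar>snd z\<bar> \<le> B"
    unfolding \<pi>(2)[symmetric]
    by (subst AE_distr_iff[OF fst_measurable_borel[OF \<pi>(1)]]) (auto dest: borel_closed)
  then show thesis by (rule that)
qed

lemma W_ball_integrable:
  assumes "Q \<in> W_ball Xs DX DY N xh yh \<rho>" "A \<in> sets borel" and g: "continuous_on UNIV (g :: real \<Rightarrow> real)"
  shows "integrable Q (\<lambda>z. indicator A (fst z) * g (snd z))"
proof -
  have Q: "prob_space Q" "sets Q = sets borel"
    using assms(1) by (auto simp: W_ball_def distribs_def)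
  interpret prob_space Q by fact
  obtain B where B: "AE z in Q. \<bar>snd z\<bar> \<le> B"
    using W_ball_AE_snd_bounded[OF assms(1)] .
  have "bounded (g ` {-B..B})"
    by (intro compact_imp_bounded compact_continuous_image continuous_on_subset[OF g]) auto
  then obtain M where M: "M > 0" "\<forall>y\<in>{-B..B}. \<bar>g y\<bar> \<le> M"
    unfolding bounded_pos by auto
  show ?thesis
  proof (rule integrable_const_bound[where B=M])
    show "AE z in Q. norm (indicator A (fst z) * g (snd z)) \<le> M"
      using B by eventually_elim (use M in \<open>auto simp: indicator_def abs_le_iff\<close>)
    show "(\<lambda>z. indicator A (fst z) * g (snd z)) \<in> borel_measurable Q"
      using measurable_compose[OF fst_measurable_borel[OF Q(2)] borel_measurable_indicator[OF assms(2)]]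
        measurable_compose[OF snd_measurable_borel[OF Q(2)] borel_measurable_continuous_onI[OF g]]
      by (intro borel_measurable_times) (auto simp: comp_def)
  qed
qed

lemma admissible_cond_exp_sq_dev_eq_cond_var:
  assumes "Q \<in> admissible Xs DX DY N xh yh \<rho> A" "A \<in> sets borel"
  shows "cond_exp Q (\<lambda>z. (snd z - \<beta>)\<^sup>2) A = cond_var Q A + (cond_exp Q snd A - \<beta>)\<^sup>2"
proof -
  have Q: "Q \<in> W_ball Xs DX DY N xh yh \<rho>" "measure Q {z. fst z \<in> A} > 0"
    using assms(1) by (auto simp: admissible_def)
  have "continuous_on UNIV (\<lambda>y::real. y)" "continuous_on UNIV (\<lambda>y::real. y\<^sup>2)"
    by (intro continuous_intros)+
  from this[THEN W_ball_integrable[OF Q(1) assms(2)]] Q assms(2) show ?thesis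
    by (intro cond_exp_sq_dev_eq_cond_var) (auto simp: W_ball_def distribs_def)
qed

lemma cond_var_mix:
  assumes Q1: "Q1 \<in> admissible Xs DX DY N xh yh \<rho> A" and Q2: "Q2 \<in> admissible Xs DX DY N xh yh \<rho> A"
    and A: "A \<in> sets borel" and t: "0 \<le> t" "t \<le> 1"
  shows "cond_var (mix t Q1 Q2) A
    = cond_mix_weight t Q1 Q2 A * cond_exp Q1 (\<lambda>z. (snd z - cond_exp Q2 snd A)\<^sup>2) A
      + (1 - cond_mix_weight t Q1 Q2 A) * cond_var Q2 A
      - (cond_mix_weight t Q1 Q2 A * (cond_exp Q1 snd A - cond_exp Q2 snd A))\<^sup>2"
proof -
  define m where "m = cond_exp Q2 snd A"
  define w where "w = cond_mix_weight t Q1 Q2 A"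
  have Q: "prob_space Q" "sets Q = sets borel" "measure Q {z. fst z \<in> A} > 0"
      "Q \<in> W_ball Xs DX DY N xh yh \<rho>" if "Q \<in> {Q1, Q2}" for Q
    using that Q1 Q2 by (auto simp: admissible_def W_ball_def distribs_def)
  have int: "integrable Q (\<lambda>z. indicator A (fst z) * snd z)"
    "integrable Q (\<lambda>z. indicator A (fst z) * (snd z - m)\<^sup>2)" if "Q \<in> {Q1, Q2}" for Q
    by (rule W_ball_integrable[OF Q(4)[OF that] A, of "\<lambda>y. y", simplified]
        W_ball_integrable[OF Q(4)[OF that] A, of "\<lambda>y. (y - m)\<^sup>2", simplified];
        intro continuous_intros)+
  have mix_eq: "cond_exp (mix t Q1 Q2) g A = w * cond_exp Q1 g A + (1 - w) * cond_exp Q2 g A"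
    if "\<And>Q. Q \<in> {Q1, Q2} \<Longrightarrow> integrable Q (\<lambda>z. indicator A (fst z) * g z)" for g
    unfolding w_def using Q that by (intro cond_exp_mix A t) auto
  have "cond_var (mix t Q1 Q2) A
      = cond_exp (mix t Q1 Q2) (\<lambda>z. (snd z - m)\<^sup>2) A - (cond_exp (mix t Q1 Q2) snd A - m)\<^sup>2"
    using admissible_cond_exp_sq_dev_eq_cond_var[OF mix_in_admissible[OF Q1 Q2 A t] A] by simp
  also have "\<dots> = w * cond_exp Q1 (\<lambda>z. (snd z - m)\<^sup>2) A + (1 - w) * cond_var Q2 A
      - (w * (cond_exp Q1 snd A - m))\<^sup>2"
  proof -
    have "cond_exp (mix t Q1 Q2) (\<lambda>z. (snd z - m)\<^sup>2) A
        = w * cond_exp Q1 (\<lambda>z. (snd z - m)\<^sup>2) A + (1 - w) * cond_var Q2 A"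
      using mix_eq[OF int(2)] by (simp add: cond_var_def m_def)
    moreover have "cond_exp (mix t Q1 Q2) snd A - m = w * (cond_exp Q1 snd A - m)"
      using mix_eq[OF int(1)] by (simp add: m_def algebra_simps)
    ultimately show ?thesis by simp
  qed
  finally show ?thesis by (simp add: m_def w_def)
qed

lemma cond_exp_sq_dev_le_max_cond_var:
  assumes A: "A \<in> sets borel"
    and Qs_adm: "Qs \<in> admissible Xs DX DY N xh yh \<rho> A"
    and Qs_max: "\<forall>Q\<in>admissible Xs DX DY N xh yh \<rho> A. cond_var Q A \<le> cond_var Qs A"
    and Q_adm: "Q \<in> admissible Xs DX DY N xh yh \<rho> A"
  shows "cond_exp Q (\<lambda>z. (snd z - cond_exp Qs snd A)\<^sup>2) A \<le> cond_var Qs A"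
proof -
  define e where "e = cond_exp Q (\<lambda>z. (snd z - cond_exp Qs snd A)\<^sup>2) A"
  define V where "V = cond_var Qs A"
  define K where "K = (cond_exp Q snd A - cond_exp Qs snd A)\<^sup>2"
  let ?w = "\<lambda>t. cond_mix_weight t Q Qs A"
  have pos: "measure Q {z. fst z \<in> A} > 0" "measure Qs {z. fst z \<in> A} > 0"
    using Q_adm Qs_adm by (auto simp: admissible_def)
  have "e - V \<le> ?w t * K" if t: "0 < t" "t < 1" for t
  proof -
    have "cond_var (mix t Q Qs) A \<le> V"
      using Qs_max mix_in_admissible[OF Q_adm Qs_adm A] t unfolding V_def by auto
    then have "?w t * e + (1 - ?w t) * V - (?w t)\<^sup>2 * K \<le> V"
      unfolding cond_var_mix[OF Q_adm Qs_adm A less_imp_le[OF t(1)] less_imp_le[OF t(2)]]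
      by (simp add: e_def V_def K_def power_mult_distrib)
    then have "?w t * (e - V) \<le> ?w t * (?w t * K)"
      by (simp add: power2_eq_square algebra_simps)
    then show ?thesis
      using cond_mix_weight_pos[OF t pos] by simp
  qed
  then have "eventually (\<lambda>t. e - V \<le> ?w t * K) (at_right 0)"
    using eventually_at_right_real[OF zero_less_one] by (auto elim: eventually_mono)
  moreover have "((\<lambda>t. ?w t * K) \<longlongrightarrow> 0 * K) (at_right 0)"
    by (intro tendsto_intros tendsto_cond_mix_weight pos(2))
  ultimately have "e - V \<le> 0"
    by (intro tendsto_le[OF trivial_limit_at_right_real _ tendsto_const]) auto
  then show ?thesis by (simp add: e_def V_def)
qed

end

theorem proposition5:
  fixes Xs :: "'a::euclidean_space set"
    and DX :: "'a \<Rightarrow> 'a \<Rightarrow> real" and DY :: "real \<Rightarrow> real \<Rightarrow> real"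
    and N :: nat and xh :: "nat \<Rightarrow> 'a" and yh :: "nat \<Rightarrow> real"
    and x0 :: 'a and \<gamma> \<rho> :: real and Qs :: "('a \<times> real) measure"
  assumes DX_metric: "\<forall>a\<in>Xs. \<forall>b\<in>Xs. DX a b \<ge> 0 \<and> (DX a b = 0 \<longleftrightarrow> a = b) \<and> DX a b = DX b a"
    and DX_tri: "\<forall>a\<in>Xs. \<forall>b\<in>Xs. \<forall>c\<in>Xs. DX a c \<le> DX a b + DX b c"
    and DX_cont: "continuous_on (Xs \<times> Xs) (\<lambda>(a, b). DX a b)"
    and DY_metric: "\<forall>a b. DY a b \<ge> 0 \<and> (DY a b = 0 \<longleftrightarrow> a = b) \<and> DY a b = DY b a"
    and DY_tri: "\<forall>a b c. DY a c \<le> DY a b + DY b c"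
    and DY_cont: "continuous_on UNIV (\<lambda>(a, b). DY a b)"
    and DY_convex: "\<forall>yh0. convex_on UNIV (\<lambda>y. DY y yh0)"
    and DY_coercive: "\<forall>yh0. filterlim (\<lambda>y. DY y yh0) at_top at_infinity"
    and N_pos: "N \<ge> 1"
    and data: "\<forall>i<N. xh i \<in> Xs"
    and x0: "x0 \<in> Xs" and gamma: "\<gamma> \<ge> 0"
    and nbhd_compact: "compact (nbhd Xs DX \<gamma> x0)"
    and rho: "\<rho> \<ge> Min ((\<lambda>i. kappa DX DY (nbhd Xs DX \<gamma> x0) xh yh i) ` {..<N})"
    and Qs_adm: "Qs \<in> admissible Xs DX DY N xh yh \<rho> (nbhd Xs DX \<gamma> x0)"
    and Qs_max: "\<forall>Q\<in>admissible Xs DX DY N xh yh \<rho> (nbhd Xs DX \<gamma> x0).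
                   cond_var Q (nbhd Xs DX \<gamma> x0) \<le> cond_var Qs (nbhd Xs DX \<gamma> x0)"
  shows "(\<forall>\<beta>. f_obj Xs DX DY N xh yh \<rho> (nbhd Xs DX \<gamma> x0) (cond_exp Qs snd (nbhd Xs DX \<gamma> x0))
              \<le> f_obj Xs DX DY N xh yh \<rho> (nbhd Xs DX \<gamma> x0) \<beta>)
       \<and> (\<forall>\<beta>. (\<forall>\<beta>'. f_obj Xs DX DY N xh yh \<rho> (nbhd Xs DX \<gamma> x0) \<beta>
                      \<le> f_obj Xs DX DY N xh yh \<rho> (nbhd Xs DX \<gamma> x0) \<beta>')
              \<longrightarrow> \<beta> = cond_exp Qs snd (nbhd Xs DX \<gamma> x0))"
proof -
  let ?A = "nbhd Xs DX \<gamma> x0"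
  let ?f = "f_obj Xs DX DY N xh yh \<rho> ?A"
  define m where "m = cond_exp Qs snd ?A"
  define V where "V = cond_var Qs ?A"
  have A: "?A \<in> sets borel"
    using nbhd_compact by (intro borel_closed compact_imp_closed)
  have DX_nonneg: "\<forall>a\<in>Xs. \<forall>b\<in>Xs. DX a b \<ge> 0"
    using DX_metric by auto
  note setting = DX_nonneg data N_pos DY_coercive
  have f_at_m: "?f m \<le> ereal V"
    unfolding f_obj_def m_def V_def
    using cond_exp_sq_dev_le_max_cond_var[OF setting A Qs_adm Qs_max] by (auto intro: SUP_least)
  have f_lower: "ereal (V + (m - \<beta>)\<^sup>2) \<le> ?f \<beta>" for \<beta>
    unfolding f_obj_def m_def V_def
    using admissible_cond_exp_sq_dev_eq_cond_var[OF setting Qs_adm A, of \<beta>]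
    by (intro SUP_upper2[OF Qs_adm]) simp
  have "?f m \<le> ?f \<beta>" for \<beta>
    using f_at_m f_lower[of \<beta>] by (meson ereal_less_eq(3) order_trans zero_le_power2 le_add_same_cancel1)
  moreover have "\<beta> = m" if "\<forall>\<beta>'. ?f \<beta> \<le> ?f \<beta>'" for \<beta>
    using f_lower[of \<beta>] that f_at_m by (fastforce dest: order_trans)
  ultimately show ?thesis by (simp add: m_def)
qed

end
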